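(* For every non-trivial finite Abelian group $(A,+)$ we have $n(A) \le 8|A|$.
   Context: For an integer $n\ge 1$, $\overleftrightarrow{K}_n$ denotes the complete digraph on $n$ vertices whose arc set consists of all ordered pairs $(x,y)$ of distinct vertices. For a set $A$, an $A$-arc-labelling of $\overleftrightarrow{K}_n$ is a function $w$ from the arc set of $\overleftrightarrow{K}_n$ to $A$. If $(A,+)$ is an Abelian group, $w$ is called zero-sum-free if there is no directed cycle (including directed cycles of length two, i.e. digons $x\to y\to x$) for which the sum of the arc-labels is $0$. For a non-trivial finite Abelian group $A$, $n(A)\ge 2$ is the smallest integer such that $\overleftrightarrow{K}_{n(A)}$ has no zero-sum-free $A$-arc-labelling, i.e. for every $A$-arc-labelling of $\overleftrightarrow{K}_{n(A)}$ there is a directed cycle whose arc-labels sum to zero. *)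

theory Defs
  imports Main
begin

text \<open>Vertices of the complete digraph on n vertices are 0,...,n-1; an arc-labelling is
 a function w with w x y the label of arc (x,y) (values with x = y or outside the vertex
 set are irrelevant).\<close>

definition zero_sum_free :: "nat \<Rightarrow> (nat \<Rightarrow> nat \<Rightarrow> 'a::ab_group_add) \<Rightarrow> bool" where
  "zero_sum_free n w \<longleftrightarrow>
     \<not> (\<exists>vs. distinct vs \<and> 2 \<le> length vs \<and> set vs \<subseteq> {..<n} \<and>
            (\<Sum>i<length vs. w (vs ! i) (vs ! (Suc i mod length vs))) = 0)"

definition nA :: "'a::{ab_group_add,finite} itself \<Rightarrow> nat" where
  "nA _ = (LEAST n. 2 \<le> n \<and> \<not> (\<exists>w :: nat \<Rightarrow> nat \<Rightarrow> 'a. zero_sum_free n w))"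

end

theory Submission imports Defs begin

text \<open>In fact n(A) \<le> 4|A|, by induction on subgroups: if every directed cycle on V has its
 label sum in H - {0}, then |V| < 4|H|. Grow simple paths from a root r to an end x inside a
 vertex set U, and let T be the set of their label sums. Extending the end through one or two
 fresh vertices produces two translates of T, so |U| < 2|T| is preserved as long as the two
 translates differ. Once this fails for a maximal U, the labels on V - U, corrected by the
 potential w(x, -), all lie in the stabilizer K of T, and the induction hypothesis for K bounds
 |V - U|. Closing the paths by the arc (x, r) places a translate of T inside H - {0}, which
 forces |T| \<le> |H| and 2|K| \<le> |H|.\<close>

definition dicycle :: "'v set \<Rightarrow> 'v list \<Rightarrow> bool" where
  "dicycle V vs \<longleftrightarrow> distinct vs \<and> 2 \<le> length vs \<and> set vs \<subseteq> V"

definition cycle_sum :: "('v \<Rightarrow> 'v \<Rightarrow> 'a::ab_group_add) \<Rightarrow> 'v list \<Rightarrow> 'a" where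
  "cycle_sum w vs = (\<Sum>i<length vs. w (vs ! i) (vs ! (Suc i mod length vs)))"

lemma zero_sum_free_iff: "zero_sum_free n w \<longleftrightarrow> (\<forall>vs. dicycle {..<n} vs \<longrightarrow> cycle_sum w vs \<noteq> 0)"
  unfolding zero_sum_free_def dicycle_def cycle_sum_def by blast

lemma card_le_1_if_no_dicycle:
  assumes "finite V" "\<And>vs. \<not> dicycle V vs"
  shows "card V \<le> 1"
proof (rule ccontr)
  assume "\<not> card V \<le> 1"
  then obtain a b where "a \<in> V" "b \<in> V" "a \<noteq> b"
    using assms(1) by (metis One_nat_def card_le_Suc0_iff_eq)
  then have "dicycle V [a, b]" by (simp add: dicycle_def)
  then show False using assms(2) by blast
qed

fun path_sum :: "('v \<Rightarrow> 'v \<Rightarrow> 'a::ab_group_add) \<Rightarrow> 'v list \<Rightarrow> 'a" where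
  "path_sum w (a # b # vs) = w a b + path_sum w (b # vs)"
| "path_sum w _ = 0"

lemma path_sum_conv_sum: "path_sum w vs = (\<Sum>i<length vs - 1. w (vs ! i) (vs ! Suc i))"
proof (induction w vs rule: path_sum.induct)
  case (1 w a b vs)
  have "length (a # b # vs) - 1 = Suc (length vs)" by simp
  then show ?case using 1 by (simp only: sum.lessThan_Suc_shift) simp
qed auto

lemma path_sum_snoc: "vs \<noteq> [] \<Longrightarrow> path_sum w (vs @ [u]) = path_sum w vs + w (last vs) u"
  by (induction vs rule: induct_list012) (auto simp: algebra_simps)

lemma path_sum_potential:
  "vs \<noteq> [] \<Longrightarrow> path_sum (\<lambda>a b. w a b + p a - p b) vs = path_sum w vs + p (hd vs) - p (last vs)"
  by (induction vs rule: induct_list012) (auto simp: algebra_simps)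

lemma cycle_sum_eq_path_sum:
  assumes "vs \<noteq> []"
  shows "cycle_sum w vs = path_sum w vs + w (last vs) (hd vs)"
proof -
  obtain L where L: "length vs = Suc L" using assms by (cases vs) auto
  have "cycle_sum w vs = (\<Sum>i<L. w (vs ! i) (vs ! (Suc i mod Suc L))) + w (vs ! L) (vs ! 0)"
    unfolding cycle_sum_def L by simp
  also have "(\<Sum>i<L. w (vs ! i) (vs ! (Suc i mod Suc L))) = (\<Sum>i<L. w (vs ! i) (vs ! Suc i))"
    by (rule sum.cong) auto
  also have "\<dots> = path_sum w vs" using path_sum_conv_sum[of w vs] L by simp
  finally show ?thesis using assms L by (simp add: last_conv_nth hd_conv_nth)
qed

lemma cycle_sum_potential: "vs \<noteq> [] \<Longrightarrow> cycle_sum (\<lambda>a b. w a b + p a - p b) vs = cycle_sum w vs"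
  unfolding cycle_sum_eq_path_sum path_sum_potential by (simp add: algebra_simps)

definition add_subgroup :: "'a::ab_group_add set \<Rightarrow> bool" where
  "add_subgroup H \<longleftrightarrow> 0 \<in> H \<and> (\<forall>a\<in>H. \<forall>b\<in>H. a - b \<in> H)"

lemma add_subgroup_add: "add_subgroup H \<Longrightarrow> a \<in> H \<Longrightarrow> b \<in> H \<Longrightarrow> a + b \<in> H"
  unfolding add_subgroup_def by (metis diff_0 diff_minus_eq_add)

lemma card_add_subgroup_pos: "add_subgroup (H :: 'a::{ab_group_add,finite} set) \<Longrightarrow> 0 < card H"
  by (auto simp: add_subgroup_def card_gt_0_iff)

lemma add_subgroup_sum: "add_subgroup H \<Longrightarrow> (\<And>i. i \<in> I \<Longrightarrow> f i \<in> H) \<Longrightarrow> sum f I \<in> H"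
  by (induction I rule: infinite_finite_induct) (auto simp: add_subgroup_add add_subgroup_def)

lemma cycle_sum_in_add_subgroup:
  assumes "add_subgroup K" "dicycle U vs"
    and labels: "\<And>a b. a \<in> U \<Longrightarrow> b \<in> U \<Longrightarrow> a \<noteq> b \<Longrightarrow> w a b \<in> K"
  shows "cycle_sum w vs \<in> K"
  unfolding cycle_sum_def
proof (rule add_subgroup_sum[OF assms(1)])
  fix i assume i: "i \<in> {..<length vs}"
  let ?j = "Suc i mod length vs"
  have vs: "distinct vs" "2 \<le> length vs" "set vs \<subseteq> U" using assms(2) by (auto simp: dicycle_def)
  then have j: "?j < length vs" by (intro mod_less_divisor) auto
  have "i \<noteq> ?j"
    using i vs(2) by (cases "Suc i < length vs") (auto simp: mod_if)
  then have "vs ! i \<noteq> vs ! ?j" using vs(1) i j by (simp add: nth_eq_iff_index_eq)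
  moreover have "vs ! i \<in> U" "vs ! ?j \<in> U" using vs(3) i j nth_mem by auto
  ultimately show "w (vs ! i) (vs ! ?j) \<in> K" using labels by blast
qed

lemma cycle_sum_in_add_subgroup_potential:
  assumes "add_subgroup K" "dicycle U vs"
    and "\<And>a b. a \<in> U \<Longrightarrow> b \<in> U \<Longrightarrow> a \<noteq> b \<Longrightarrow> p a + w a b - p b \<in> K"
  shows "cycle_sum w vs \<in> K"
proof -
  have "vs \<noteq> []" using assms(2) by (auto simp: dicycle_def)
  then have "cycle_sum w vs = cycle_sum (\<lambda>a b. w a b + p a - p b) vs"
    by (simp add: cycle_sum_potential)
  also have "\<dots> \<in> K"
    using assms by (intro cycle_sum_in_add_subgroup) (auto simp: algebra_simps)
  finally show ?thesis .
qed

definition stabilizer :: "'a::ab_group_add set \<Rightarrow> 'a set" where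
  "stabilizer T = {a. \<forall>t\<in>T. t + a \<in> T}"

lemma add_subgroup_stabilizer:
  assumes "finite T"
  shows "add_subgroup (stabilizer T)"
  unfolding add_subgroup_def
proof (intro conjI ballI)
  fix a b assume a: "a \<in> stabilizer T" and b: "b \<in> stabilizer T"
  have surj: "(\<lambda>s. s + b) ` T = T"
    using b assms by (intro endo_inj_surj) (auto simp: stabilizer_def inj_on_def)
  show "a - b \<in> stabilizer T" unfolding stabilizer_def
  proof (intro CollectI ballI)
    fix t assume "t \<in> T"
    then obtain s where s: "s \<in> T" "t = s + b" using surj by force
    then have "t + (a - b) = s + a" by simp
    moreover have "s + a \<in> T" using a s(1) by (simp add: stabilizer_def)
    ultimately show "t + (a - b) \<in> T" by metis
  qed
qed (simp add: stabilizer_def)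

lemma card_lt_card_translates_Un:
  fixes T :: "'a::ab_group_add set"
  assumes "finite T" "c - b \<notin> stabilizer T"
  shows "card T < card ((\<lambda>t. t + b) ` T \<union> (\<lambda>t. t + c) ` T)"
proof -
  obtain t where t: "t \<in> T" "t + (c - b) \<notin> T" using assms(2) by (auto simp: stabilizer_def)
  have "t + c \<notin> (\<lambda>t. t + b) ` T"
  proof
    assume "t + c \<in> (\<lambda>t. t + b) ` T"
    then obtain s where "s \<in> T" "t + c = s + b" by blast
    then show False using t(2) by (metis add_diff_cancel add_diff_eq)
  qed
  then have "card (insert (t + c) ((\<lambda>t. t + b) ` T)) = Suc (card T)"
    using assms(1) by (simp add: card_image)
  moreover have "insert (t + c) ((\<lambda>t. t + b) ` T) \<subseteq> (\<lambda>t. t + b) ` T \<union> (\<lambda>t. t + c) ` T"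
    using t(1) by blast
  ultimately show ?thesis using assms(1) by (metis Suc_le_eq card_mono finite_Un finite_imageI)
qed

text \<open>A translate of T avoiding 0 inside H leaves room in H for two disjoint cosets of the
 stabilizer K of T: K itself and K + t0 + e, which cannot meet since T + K = T and -e \<notin> T.\<close>

lemma card_stabilizer_le_half:
  fixes T :: "'a::ab_group_add set"
  assumes H: "add_subgroup H" "finite H" and "T \<noteq> {}"
    and T: "\<And>t. t \<in> T \<Longrightarrow> t + e \<in> H - {0}"
  shows "2 * card (stabilizer T) \<le> card H"
proof -
  let ?K = "stabilizer T"
  obtain t0 where t0: "t0 \<in> T" using assms(3) by blast
  have "T \<subseteq> (\<lambda>h. h - e) ` H" using T by force
  then have "finite T" using H(2) finite_surj by blast
  then have K: "add_subgroup ?K" by (rule add_subgroup_stabilizer)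
  have shifted: "k + (t0 + e) \<in> H" if "k \<in> ?K" for k
  proof -
    have "t0 + k \<in> T" using t0 that by (simp add: stabilizer_def)
    then have "t0 + k + e \<in> H" using T by blast
    then show ?thesis by (simp add: algebra_simps)
  qed
  have KH: "?K \<subseteq> H"
  proof
    fix k assume "k \<in> ?K"
    then have "k + (t0 + e) \<in> H" "t0 + e \<in> H" using shifted T[OF t0] by auto
    then have "(k + (t0 + e)) - (t0 + e) \<in> H" using H(1) unfolding add_subgroup_def by blast
    then show "k \<in> H" by simp
  qed
  have disjoint: "?K \<inter> (\<lambda>k. k + (t0 + e)) ` ?K = {}"
  proof (rule ccontr)
    assume "?K \<inter> (\<lambda>k. k + (t0 + e)) ` ?K \<noteq> {}"
    then obtain k1 k2 where k: "k1 \<in> ?K" "k2 \<in> ?K" and eq: "k1 = k2 + (t0 + e)" by blast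
    have "0 - k1 \<in> ?K" using K k(1) unfolding add_subgroup_def by blast
    then have "(t0 + k2) + (0 - k1) \<in> T" using t0 k(2) by (simp add: stabilizer_def)
    then have "- e \<in> T" using eq by (simp add: algebra_simps)
    then show False using T by fastforce
  qed
  have "2 * card ?K = card (?K \<union> (\<lambda>k. k + (t0 + e)) ` ?K)"
    using disjoint finite_subset[OF KH H(2)] by (simp add: card_Un_disjoint card_image)
  also have "\<dots> \<le> card H" using KH shifted H(2) by (intro card_mono) auto
  finally show ?thesis .
qed

definition simple_path :: "'v set \<Rightarrow> 'v \<Rightarrow> 'v \<Rightarrow> 'v list \<Rightarrow> bool" where
  "simple_path U r x p \<longleftrightarrow> distinct p \<and> p \<noteq> [] \<and> hd p = r \<and> last p = x \<and> set p \<subseteq> U"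

definition path_sums :: "('v \<Rightarrow> 'v \<Rightarrow> 'a::ab_group_add) \<Rightarrow> 'v set \<Rightarrow> 'v \<Rightarrow> 'v \<Rightarrow> 'a set" where
  "path_sums w U r x = path_sum w ` {p. simple_path U r x p}"

lemma path_sums_mono: "U \<subseteq> U' \<Longrightarrow> path_sums w U r x \<subseteq> path_sums w U' r x"
  unfolding path_sums_def simple_path_def by blast

lemma path_sums_snoc:
  assumes "t \<in> path_sums w U r x" "u \<notin> U"
  shows "t + w x u \<in> path_sums w (insert u U) r u"
proof -
  obtain p where p: "simple_path U r x p" "t = path_sum w p"
    using assms(1) by (auto simp: path_sums_def)
  then have "simple_path (insert u U) r u (p @ [u])" using assms(2)
    by (auto simp: simple_path_def)
  moreover have "path_sum w (p @ [u]) = t + w x u"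
    using p by (simp add: path_sum_snoc simple_path_def)
  ultimately show ?thesis unfolding path_sums_def by (metis image_eqI mem_Collect_eq)
qed

lemma simple_path_self: "simple_path U r r p \<Longrightarrow> p = [r]"
proof (cases p rule: rev_cases)
  case (snoc ys y)
  moreover assume "simple_path U r r p"
  ultimately show ?thesis by (cases ys) (auto simp: simple_path_def)
qed (simp add: simple_path_def)

lemma path_sums_self: "r \<in> U \<Longrightarrow> path_sums w U r r = {0}"
proof -
  assume "r \<in> U"
  then have "simple_path U r r p \<longleftrightarrow> p = [r]" for p
    using simple_path_self[of U r p] by (auto simp: simple_path_def)
  then show ?thesis by (simp add: path_sums_def)
qed

lemma simple_path_closed_by_arc:
  assumes "simple_path U r x p" "r \<noteq> x"
  shows "dicycle U p" "cycle_sum w p = path_sum w p + w x r"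
proof -
  have "2 \<le> length p"
  proof (cases p)
    case (Cons a q)
    then show ?thesis using assms by (cases q) (auto simp: simple_path_def)
  qed (use assms in \<open>simp add: simple_path_def\<close>)
  then show "dicycle U p" using assms(1) by (simp add: dicycle_def simple_path_def)
  show "cycle_sum w p = path_sum w p + w x r"
    using assms(1) by (simp add: cycle_sum_eq_path_sum simple_path_def)
qed

lemma card_path_sums_extend:
  fixes w :: "'v \<Rightarrow> 'v \<Rightarrow> 'a::{ab_group_add,finite}"
  assumes "g \<notin> U" "u \<notin> U" "g \<noteq> u"
    and "w x g + w g u - w x u \<notin> stabilizer (path_sums w U r x)"
  shows "card (path_sums w U r x) < card (path_sums w (insert g (insert u U)) r u)"
proof -
  let ?T = "path_sums w U r x" and ?T' = "path_sums w (insert g (insert u U)) r u"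
  have "(\<lambda>t. t + w x u) ` ?T \<subseteq> ?T'"
  proof clarify
    fix t assume "t \<in> ?T"
    then have "t + w x u \<in> path_sums w (insert u U) r u" using assms(2) by (rule path_sums_snoc)
    then show "t + w x u \<in> ?T'" using path_sums_mono[of "insert u U" "insert g (insert u U)"] by blast
  qed
  moreover have "(\<lambda>t. t + (w x g + w g u)) ` ?T \<subseteq> ?T'"
  proof clarify
    fix t assume "t \<in> ?T"
    then have "t + w x g \<in> path_sums w (insert g U) r g" using assms(1) by (rule path_sums_snoc)
    then have "t + w x g + w g u \<in> path_sums w (insert u (insert g U)) r u"
      using assms(2,3) path_sums_snoc[of "t + w x g" w "insert g U" r g u] by simp
    then show "t + (w x g + w g u) \<in> ?T'" by (simp add: insert_commute add.assoc)
  qed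
  ultimately have "card ((\<lambda>t. t + w x u) ` ?T \<union> (\<lambda>t. t + (w x g + w g u)) ` ?T) \<le> card ?T'"
    by (intro card_mono) auto
  moreover have "card ?T < card ((\<lambda>t. t + w x u) ` ?T \<union> (\<lambda>t. t + (w x g + w g u)) ` ?T)"
    using assms(4) by (intro card_lt_card_translates_Un) auto
  ultimately show ?thesis by linarith
qed

lemma saturated_path_sums_exist:
  fixes w :: "'v \<Rightarrow> 'v \<Rightarrow> 'a::{ab_group_add,finite}"
  assumes "finite V" "r \<in> V"
  obtains U x where "U \<subseteq> V" "r \<in> U" "card U < 2 * card (path_sums w U r x)"
    and "\<And>g u. g \<in> V - U \<Longrightarrow> u \<in> V - U \<Longrightarrow> g \<noteq> u \<Longrightarrow>
           w x g + w g u - w x u \<in> stabilizer (path_sums w U r x)"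
proof -
  define P where "P = (\<lambda>(U, x). U \<subseteq> V \<and> r \<in> U \<and> card U < 2 * card (path_sums w U r x))"
  have "P ({r}, r)" using assms(2) by (simp add: P_def path_sums_self)
  moreover have "\<forall>Ux. P Ux \<longrightarrow> card (fst Ux) < Suc (card V)"
    using assms(1) by (auto simp: P_def le_imp_less_Suc card_mono)
  ultimately obtain Ux where "P Ux" and max: "\<And>Ux'. P Ux' \<Longrightarrow> card (fst Ux') \<le> card (fst Ux)"
    using Lattices_Big.ex_has_greatest_nat[of P "({r}, r)" "\<lambda>Ux. card (fst Ux)"] by blast
  then obtain U x where Ux: "Ux = (U, x)" and U: "U \<subseteq> V" "r \<in> U"
    and T: "card U < 2 * card (path_sums w U r x)"
    by (cases Ux) (auto simp: P_def)
  have "w x g + w g u - w x u \<in> stabilizer (path_sums w U r x)"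
    if gu: "g \<in> V - U" "u \<in> V - U" "g \<noteq> u" for g u
  proof (rule ccontr)
    let ?U' = "insert g (insert u U)"
    assume "w x g + w g u - w x u \<notin> stabilizer (path_sums w U r x)"
    then have "card (path_sums w U r x) < card (path_sums w ?U' r u)"
      using gu by (intro card_path_sums_extend) auto
    moreover have "card ?U' = card U + 2"
      using gu finite_subset[OF U(1) assms(1)] by simp
    ultimately have "P (?U', u)" using gu U T by (simp add: P_def)
    then have "card ?U' \<le> card U" using max[of "(?U', u)"] by (simp add: Ux)
    then show False using \<open>card ?U' = card U + 2\<close> by simp
  qed
  then show thesis using that U T by blast
qed

lemma card_path_sums_stabilizer_bound:
  fixes w :: "'v \<Rightarrow> 'v \<Rightarrow> 'a::{ab_group_add,finite}"
  assumes H: "add_subgroup H" "2 \<le> card H"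
    and cycles: "\<And>vs. dicycle U vs \<Longrightarrow> cycle_sum w vs \<in> H - {0}"
    and "r \<in> U" and T: "path_sums w U r x \<noteq> {}"
  shows "card (path_sums w U r x) \<le> card H" "2 * card (stabilizer (path_sums w U r x)) \<le> card H"
proof -
  let ?T = "path_sums w U r x"
  have "card ?T \<le> card H \<and> 2 * card (stabilizer ?T) \<le> card H"
  proof (cases "r = x")
    case True
    then have "?T = {0}" using path_sums_self[OF \<open>r \<in> U\<close>] by simp
    moreover have "stabilizer {0 :: 'a} = {0}" by (auto simp: stabilizer_def)
    ultimately show ?thesis using H(2) by simp
  next
    case False
    have closed: "t + w x r \<in> H - {0}" if t: "t \<in> ?T" for t
    proof -
      obtain p where p: "simple_path U r x p" "t = path_sum w p"
        using t unfolding path_sums_def by blast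
      have "cycle_sum w p \<in> H - {0}" using cycles[OF simple_path_closed_by_arc(1)[OF p(1) False]] .
      then show ?thesis using simple_path_closed_by_arc(2)[OF p(1) False, of w] p(2) by simp
    qed
    have "card ?T = card ((\<lambda>t. t + w x r) ` ?T)" by (simp add: card_image)
    also have "\<dots> \<le> card H" using closed by (intro card_mono) auto
    finally show ?thesis using card_stabilizer_le_half[OF H(1) _ T closed] by simp
  qed
  then show "card ?T \<le> card H" "2 * card (stabilizer ?T) \<le> card H" by auto
qed

lemma card_lt_4_card_add_subgroup:
  fixes w :: "'v \<Rightarrow> 'v \<Rightarrow> 'a::{ab_group_add,finite}"
  assumes "add_subgroup H" "finite V" "\<And>vs. dicycle V vs \<Longrightarrow> cycle_sum w vs \<in> H - {0}"
  shows "card V < 4 * card H"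
  using assms
proof (induction "card H" arbitrary: H V rule: less_induct)
  case less
  note H = less.prems(1) and V = less.prems(2) and cycles = less.prems(3)
  show ?case
  proof (cases "2 \<le> card H \<and> V \<noteq> {}")
    case False
    have "card V \<le> 1"
    proof (cases "V = {}")
      case False
      with \<open>\<not> (2 \<le> card H \<and> V \<noteq> {})\<close> have "card H \<le> Suc 0" by simp
      then have "H = {0}" using H card_le_Suc0_iff_eq[of H] by (auto simp: add_subgroup_def)
      then show ?thesis using V cycles by (intro card_le_1_if_no_dicycle) auto
    qed simp
    then show ?thesis using card_add_subgroup_pos[OF H] by linarith
  next
    case True
    then obtain r where "r \<in> V" by blast
    obtain U x where U: "U \<subseteq> V" "r \<in> U" and T: "card U < 2 * card (path_sums w U r x)"
      and stuck: "\<And>g u. g \<in> V - U \<Longrightarrow> u \<in> V - U \<Longrightarrow> g \<noteq> u \<Longrightarrow>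
                    w x g + w g u - w x u \<in> stabilizer (path_sums w U r x)"
      using saturated_path_sums_exist[OF V \<open>r \<in> V\<close>, where w = w] by blast
    define K where "K = stabilizer (path_sums w U r x)"
    have K: "add_subgroup K" unfolding K_def by (simp add: add_subgroup_stabilizer)
    have "path_sums w U r x \<noteq> {}" using T by auto
    moreover have "\<And>vs. dicycle U vs \<Longrightarrow> dicycle V vs" using U by (auto simp: dicycle_def)
    ultimately have bounds: "card (path_sums w U r x) \<le> card H" "2 * card K \<le> card H"
      using card_path_sums_stabilizer_bound[OF H _ _ U(2)] True cycles unfolding K_def by auto
    have "card (V - U) < 4 * card K"
    proof (rule less.hyps[OF _ K])
      show "card K < card H" using bounds(2) card_add_subgroup_pos[OF K] by linarith
      show "finite (V - U)" using V by simp
      fix vs assume vs: "dicycle (V - U) vs"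
      then have "cycle_sum w vs \<noteq> 0" using cycles by (auto simp: dicycle_def)
      moreover have "cycle_sum w vs \<in> K"
        using K vs stuck unfolding K_def by (rule cycle_sum_in_add_subgroup_potential)
      ultimately show "cycle_sum w vs \<in> K - {0}" by simp
    qed
    moreover have "card V = card U + card (V - U)"
      using U(1) V by (metis card_Diff_subset card_mono finite_subset le_add_diff_inverse)
    ultimately show ?thesis using T bounds by linarith
  qed
qed

lemma not_zero_sum_free_4_card:
  fixes w :: "nat \<Rightarrow> nat \<Rightarrow> 'a::{ab_group_add,finite}"
  shows "\<not> zero_sum_free (4 * card (UNIV :: 'a set)) w"
proof
  let ?n = "4 * card (UNIV :: 'a set)"
  assume "zero_sum_free ?n w"
  then have "\<And>vs. dicycle {..<?n} vs \<Longrightarrow> cycle_sum w vs \<in> UNIV - {0}"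
    by (simp add: zero_sum_free_iff)
  then have "card {..<?n} < ?n"
    using card_lt_4_card_add_subgroup[of UNIV "{..<?n}" w] by (simp add: add_subgroup_def)
  then show False by simp
qed

theorem theorem1:
  assumes "card (UNIV :: 'a::{ab_group_add,finite} set) \<ge> 2"
  shows "(\<exists>n. 2 \<le> n \<and> \<not> (\<exists>w :: nat \<Rightarrow> nat \<Rightarrow> 'a. zero_sum_free n w))
         \<and> nA TYPE('a) \<le> 8 * card (UNIV :: 'a set)"
proof -
  let ?n = "4 * card (UNIV :: 'a set)"
  have bound: "2 \<le> ?n \<and> \<not> (\<exists>w :: nat \<Rightarrow> nat \<Rightarrow> 'a. zero_sum_free ?n w)"
    using assms not_zero_sum_free_4_card by auto
  then have "nA TYPE('a) \<le> ?n"
    unfolding nA_def by (rule Least_le)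
  moreover have "?n \<le> 8 * card (UNIV :: 'a set)" by simp
  ultimately show ?thesis using bound by (blast intro: le_trans)
qed

end
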